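(* If $G$ is a connected graph that is not $\omega$-evadible, then either $G$ is finite or $G$ has a vertex of infinite degree.
   Context: Cat Herding is played on a simple, possibly infinite graph $G$. The cat first places its token on a vertex. Then the players alternate, the herder moving first: the herder deletes one edge of the current graph, and then, unless the cat's current vertex has degree $0$ in the current graph, the cat moves its token along a finite path with at least one edge in the current graph to a different vertex. The cat is captured when its vertex has degree $0$ in the current graph. $G$ is $k$-evadible if the cat has a strategy (including its choice of starting vertex) that, against every herder strategy, yields a legal cat move after each of the first $k-1$ edge deletions; $G$ is $\omega$-evadible if it is $k$-evadible for every $k\in\mathbb{N}$. *)

theory Defs
  imports Main
begin

definition simple_graph :: "'a set \<Rightarrow> 'a set set \<Rightarrow> bool" where
  "simple_graph V E \<longleftrightarrow> (\<forall>e\<in>E. \<exists>x y. x \<noteq> y \<and> x \<in> V \<and> y \<in> V \<and> e = {x, y})"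

definition adj :: "'a set set \<Rightarrow> 'a \<Rightarrow> 'a \<Rightarrow> bool" where
  "adj E x y \<longleftrightarrow> {x, y} \<in> E"

definition connected_graph :: "'a set \<Rightarrow> 'a set set \<Rightarrow> bool" where
  "connected_graph V E \<longleftrightarrow> (\<forall>x\<in>V. \<forall>y\<in>V. (adj E)\<^sup>*\<^sup>* x y)"

definition degree_infinite :: "'a set set \<Rightarrow> 'a \<Rightarrow> bool" where
  "degree_infinite E v \<longleftrightarrow> infinite {w. {v, w} \<in> E}"

text \<open>cat_survives n E v: the cat sits on v, the current edge set is E, the herder is
  about to move; the cat can guarantee a legal move after each of the next n deletions.\<close>
fun cat_survives :: "nat \<Rightarrow> 'a set set \<Rightarrow> 'a \<Rightarrow> bool" where
  "cat_survives 0 E v = True"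
| "cat_survives (Suc n) E v =
     (\<forall>e\<in>E. \<exists>w. w \<noteq> v \<and> (adj (E - {e}))\<^sup>+\<^sup>+ v w \<and> cat_survives n (E - {e}) w)"

definition k_evadible :: "'a set \<Rightarrow> 'a set set \<Rightarrow> nat \<Rightarrow> bool" where
  "k_evadible V E k \<longleftrightarrow> (\<exists>v\<in>V. cat_survives (k - 1) E v)"

definition omega_evadible :: "'a set \<Rightarrow> 'a set set \<Rightarrow> bool" where
  "omega_evadible V E \<longleftrightarrow> (\<forall>k. k_evadible V E k)"

end

theory Submission
  imports Defs "HOL-Library.Transitive_Closure_Table"
begin

text \<open>
  In a connected, infinite, locally finite graph every ball around a vertex is finite, so some
  vertex lies arbitrarily far away and a shortest route to it is an arbitrarily long path.
  A cat standing on such a path with \<open>2^n\<close> vertices on either side survives \<open>n\<close> deletions: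
  the two halves of the path meeting at the cat's vertex share only that vertex, so a deleted
  edge breaks at most one of them, and the cat runs \<open>2^(n-1)\<close> steps along the intact half,
  arriving at a vertex with \<open>2^(n-1)\<close> path vertices on either side.
\<close>

lemma successively_rtrancl_path:
  "rtrancl_path r x xs y \<Longrightarrow> successively r (x # xs)"
  by (induction rule: rtrancl_path.induct) auto

lemma finite_rtrancl_path_ball:
  assumes "\<And>v. finite {w. r v w}"
  shows "finite {y. \<exists>xs. rtrancl_path r x xs y \<and> length xs \<le> N}"
proof (induction N arbitrary: x)
  case 0
  have "{y. \<exists>xs. rtrancl_path r x xs y \<and> length xs \<le> 0} = {x}"
    by (auto intro: rtrancl_path.base elim: rtrancl_path.cases)
  then show ?case by simp
next
  case (Suc N)
  have "{y. \<exists>xs. rtrancl_path r x xs y \<and> length xs \<le> Suc N}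
        \<subseteq> insert x (\<Union>z\<in>{w. r x w}. {y. \<exists>xs. rtrancl_path r z xs y \<and> length xs \<le> N})"
    by (auto elim: rtrancl_path.cases)
  moreover have "finite (insert x (\<Union>z\<in>{w. r x w}. {y. \<exists>xs. rtrancl_path r z xs y \<and> length xs \<le> N}))"
    using assms Suc.IH by blast
  ultimately show ?case by (rule finite_subset)
qed

lemma long_distinct_rtrancl_path:
  assumes "infinite {y. r\<^sup>*\<^sup>* x y}" and "\<And>v. finite {w. r v w}"
  obtains xs y where "rtrancl_path r x xs y" "distinct (x # xs)" "N < length xs"
proof -
  have "finite {y. \<exists>xs. rtrancl_path r x xs y \<and> length xs \<le> N}"
    using assms(2) by (rule finite_rtrancl_path_ball)
  with assms(1) have "infinite ({y. r\<^sup>*\<^sup>* x y} - {y. \<exists>xs. rtrancl_path r x xs y \<and> length xs \<le> N})"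
    by (rule Diff_infinite_finite[rotated])
  then obtain y where "r\<^sup>*\<^sup>* x y"
    and far: "y \<notin> {y. \<exists>xs. rtrancl_path r x xs y \<and> length xs \<le> N}"
    by (metis (no_types, lifting) DiffE ex_in_conv finite.emptyI mem_Collect_eq)
  then obtain xs where "rtrancl_path r x xs y"
    by (auto simp: rtranclp_eq_rtrancl_path)
  then obtain xs' where "rtrancl_path r x xs' y" "distinct (x # xs')"
    by (rule rtrancl_path_distinct)
  with far show thesis by (intro that) auto
qed

lemma successively_tranclp_nth:
  assumes "successively r ys" "j < k" "k < length ys"
  shows "r\<^sup>+\<^sup>+ (ys ! j) (ys ! k)"
  using assms(2,3)
proof (induction k)
  case (Suc k)
  have "r (ys ! k) (ys ! Suc k)" using assms(1) Suc.prems by (simp add: successively_nth)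
  then show ?case using Suc by (cases "j = k") auto
qed simp

lemma successively_take: "successively r xs \<Longrightarrow> successively r (take n xs)"
  by (metis append_take_drop_id successively_append_iff)

lemma successively_drop: "successively r xs \<Longrightarrow> successively r (drop n xs)"
  by (metis append_take_drop_id successively_append_iff)

lemma path_edge_removed:
  assumes "successively (adj E) ys" "\<not> successively (adj (E - {e})) ys" "distinct ys"
  obtains a b where "a \<noteq> b" "e = {a, b}" "e \<subseteq> set ys"
proof -
  obtain k where "Suc k < length ys" "{ys ! k, ys ! Suc k} = e"
    using assms(1,2) by (auto simp: successively_conv_nth adj_def)
  with assms(3) show thesis
    by (intro that[of "ys ! k" "ys ! Suc k"]) (auto simp: nth_eq_iff_index_eq)
qed

lemma path_remove_edge_keeps_half:
  assumes "successively (adj E) xs" "distinct xs" "i < length xs"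
  shows "successively (adj (E - {e})) (drop i xs) \<or> successively (adj (E - {e})) (take (Suc i) xs)"
proof (rule ccontr)
  assume both_broken: "\<not> ?thesis"
  then obtain a b where "a \<noteq> b" "e = {a, b}" "e \<subseteq> set (drop i xs)"
    using path_edge_removed assms(1,2) by (metis distinct_drop successively_drop)
  moreover have "e \<subseteq> set (take (Suc i) xs)"
    using path_edge_removed assms(1,2) both_broken by (metis distinct_take successively_take)
  moreover have "set (take (Suc i) xs) \<inter> set (drop i xs) = {xs ! i}"
  proof -
    have "set (take (Suc i) xs) = insert (xs ! i) (set (take i xs))"
      using assms(3) by (simp add: take_Suc_conv_app_nth)
    moreover have "set (drop i xs) = insert (xs ! i) (set (drop (Suc i) xs))"
      using assms(3) by (simp flip: Cons_nth_drop_Suc)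
    moreover have "set (take i xs) \<inter> set (drop (Suc i) xs) = {}"
      using assms(2) by (simp add: set_take_disj_set_drop_if_distinct)
    ultimately show ?thesis by blast
  qed
  ultimately have "{a, b} \<subseteq> {xs ! i}" by blast
  with \<open>a \<noteq> b\<close> show False by simp
qed

definition deep_in_path :: "nat \<Rightarrow> 'a set set \<Rightarrow> 'a list \<Rightarrow> nat \<Rightarrow> bool" where
  "deep_in_path n E xs i \<longleftrightarrow>
     distinct xs \<and> successively (adj E) xs \<and> 2 ^ n \<le> i \<and> i + 2 ^ n < length xs"

lemma successively_adj_rev: "successively (adj E) (rev xs) \<longleftrightarrow> successively (adj E) xs"
proof -
  have flip: "(\<lambda>x y. adj E y x) = adj E" by (intro ext) (simp add: adj_def insert_commute)
  show ?thesis by (simp only: successively_rev flip)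
qed

lemma deep_in_path_rev:
  assumes "deep_in_path n E xs i"
  shows "deep_in_path n E (rev xs) (length xs - Suc i)" "rev xs ! (length xs - Suc i) = xs ! i"
  using assms by (auto simp: deep_in_path_def successively_adj_rev rev_nth simp del: successively_rev)

lemma deep_in_path_move_right:
  assumes "deep_in_path (Suc n) E xs i" "successively (adj E') (drop i xs)"
  shows "xs ! (i + 2 ^ n) \<noteq> xs ! i" "(adj E')\<^sup>+\<^sup>+ (xs ! i) (xs ! (i + 2 ^ n))"
    "deep_in_path n E' (drop i xs) (2 ^ n)"
proof -
  have "distinct xs" and len: "i + 2 ^ Suc n < length xs"
    using assms(1) by (auto simp: deep_in_path_def)
  then show "xs ! (i + 2 ^ n) \<noteq> xs ! i" by (simp add: nth_eq_iff_index_eq)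
  have "(adj E')\<^sup>+\<^sup>+ (drop i xs ! 0) (drop i xs ! (2 ^ n))"
    using assms(2) len by (intro successively_tranclp_nth) auto
  with len show "(adj E')\<^sup>+\<^sup>+ (xs ! i) (xs ! (i + 2 ^ n))" by simp
  show "deep_in_path n E' (drop i xs) (2 ^ n)"
    using \<open>distinct xs\<close> assms(2) len by (simp add: deep_in_path_def)
qed

lemma deep_in_path_move:
  assumes "deep_in_path (Suc n) E xs i"
  obtains ys j where "ys ! j \<noteq> xs ! i" "(adj (E - {e}))\<^sup>+\<^sup>+ (xs ! i) (ys ! j)"
    "deep_in_path n (E - {e}) ys j"
proof -
  have "successively (adj E) xs" "distinct xs" "i < length xs"
    using assms by (auto simp: deep_in_path_def)
  then consider "successively (adj (E - {e})) (drop i xs)"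
    | "successively (adj (E - {e})) (take (Suc i) xs)"
    using path_remove_edge_keeps_half by blast
  then show thesis
  proof cases
    case 1
    from deep_in_path_move_right[OF assms this] \<open>i < length xs\<close>
    show thesis by (intro that[of "drop i xs" "2 ^ n"]) simp_all
  next
    case 2
    let ?i' = "length xs - Suc i"
    have "drop ?i' (rev xs) = rev (take (Suc i) xs)"
      using \<open>i < length xs\<close> by (simp add: rev_take)
    with 2 have "successively (adj (E - {e})) (drop ?i' (rev xs))"
      by (simp only: successively_adj_rev)
    from deep_in_path_move_right[OF deep_in_path_rev(1)[OF assms] this] \<open>i < length xs\<close>
    show thesis
      by (intro that[of "drop ?i' (rev xs)" "2 ^ n"]) (simp_all add: deep_in_path_rev(2)[OF assms])
  qed
qed

lemma cat_survives_deep_in_path: "deep_in_path n E xs i \<Longrightarrow> cat_survives n E (xs ! i)"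
proof (induction n arbitrary: E xs i)
  case (Suc n)
  show ?case
  proof (simp, intro ballI)
    fix e
    obtain ys j where "ys ! j \<noteq> xs ! i" "(adj (E - {e}))\<^sup>+\<^sup>+ (xs ! i) (ys ! j)"
      "deep_in_path n (E - {e}) ys j"
      using deep_in_path_move[OF Suc.prems] .
    with Suc.IH show "\<exists>w. w \<noteq> xs ! i \<and> (adj (E - {e}))\<^sup>+\<^sup>+ (xs ! i) w \<and> cat_survives n (E - {e}) w"
      by blast
  qed
qed simp

lemma simple_graph_adj_in_vertices:
  "simple_graph V E \<Longrightarrow> adj E x y \<Longrightarrow> x \<in> V"
  unfolding simple_graph_def adj_def by (metis doubleton_eq_iff)

lemma simple_graph_finite_neighbours:
  assumes "simple_graph V E" "\<forall>v\<in>V. \<not> degree_infinite E v"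
  shows "finite {w. adj E v w}"
proof (cases "v \<in> V")
  case True
  with assms(2) show ?thesis by (simp add: degree_infinite_def adj_def)
next
  case False
  with assms(1) have "{w. adj E v w} = {}" by (auto dest: simple_graph_adj_in_vertices)
  then show ?thesis by simp
qed

lemma connected_graph_long_path:
  assumes "connected_graph V E" "infinite V" "\<And>v. finite {w. adj E v w}"
  obtains xs where "distinct xs" "successively (adj E) xs" "N < length xs"
proof -
  obtain r where "r \<in> V" using assms(2) by (metis finite.emptyI ex_in_conv)
  with assms(1) have "V \<subseteq> {y. (adj E)\<^sup>*\<^sup>* r y}" by (auto simp: connected_graph_def)
  from this assms(2) have "infinite {y. (adj E)\<^sup>*\<^sup>* r y}" by (rule infinite_super)
  then obtain ys y where "rtrancl_path (adj E) r ys y" "distinct (r # ys)" "N < length ys"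
    using assms(3) by (rule long_distinct_rtrancl_path)
  then show thesis by (intro that[of "r # ys"]) (auto dest: successively_rtrancl_path)
qed

lemma omega_evadible_if_infinite_locally_finite:
  assumes "simple_graph V E" "connected_graph V E" "infinite V"
    and "\<And>v. finite {w. adj E v w}"
  shows "omega_evadible V E"
  unfolding omega_evadible_def k_evadible_def
proof
  fix k :: nat
  let ?n = "k - 1"
  obtain xs where xs: "distinct xs" "successively (adj E) xs" "2 ^ Suc ?n + 1 < length xs"
    using connected_graph_long_path assms(2-4) .
  then have "deep_in_path ?n E xs (2 ^ ?n)" by (simp add: deep_in_path_def)
  moreover have "xs ! (2 ^ ?n) \<in> V"
    using xs successively_nth[OF xs(2), of "2 ^ ?n"] assms(1)
    by (auto intro: simple_graph_adj_in_vertices)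
  ultimately show "\<exists>v\<in>V. cat_survives ?n E v" by (blast intro: cat_survives_deep_in_path)
qed

theorem mainTheorem20:
  fixes V :: "'a set" and E :: "'a set set"
  assumes "simple_graph V E"
    and "connected_graph V E"
    and "\<not> omega_evadible V E"
  shows "finite V \<or> (\<exists>v\<in>V. degree_infinite E v)"
proof (rule ccontr)
  assume "\<not> ?thesis"
  then have "infinite V" "\<forall>v\<in>V. \<not> degree_infinite E v" by auto
  with assms(1,2) have "omega_evadible V E"
    by (intro omega_evadible_if_infinite_locally_finite simple_graph_finite_neighbours)
  with assms(3) show False ..
qed

end
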